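(* Let $\mathbb{K}\in\{\mathbb{R},\mathbb{C},\mathbb{H}\}$, $\delta=\dim_\mathbb{R}\mathbb{K}$, $m\ge2$, $\alpha=\frac{\delta(m-1)-2}{2}$, $\beta=\frac{\delta-2}{2}$. Then \[ j_{\alpha+1,1}^{\delta(m-1)}<\frac{\Gamma(\alpha+2)\Gamma(\beta+1)}{\Gamma(\alpha+\beta+2)}\,\lambda_{\mathbb{K}}(m) \] for all $m\ge2$, except in the case $m=2$, $\delta=1$, in which the two sides are equal.
   Context: $\delta=1,2,4$ for $\mathbb{R},\mathbb{C},\mathbb{H}$ (quaternions). $j_{\nu,1}$ denotes the smallest positive zero of the Bessel function $J_\nu$. $\lambda_{\mathbb{K}}(m)=2^{m-1}(m-1)!$ for $\mathbb{K}=\mathbb{R}$, $2^{4(m-1)}((m-1)!)^2$ for $\mathbb{K}=\mathbb{C}$, $2^{8(m-1)}(2m-1)!(2m-2)!$ for $\mathbb{K}=\mathbb{H}$; equivalently $\lambda_{\mathbb{K}}(m)=\frac{\Gamma(\alpha+\beta+2)\Gamma(\alpha+2)}{\Gamma(\beta+1)}2^{2\delta(m-1)}$. *)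

theory Defs
  imports "HOL-Analysis.Analysis"
begin

text \<open>Bessel function of the first kind, via its power series
  J_nu(x) = sum_k (-1)^k / (k! Gamma(k+nu+1)) (x/2)^(2k+nu), for x > 0.
  We use rGamma = 1/Gamma (entire), as is standard.\<close>
definition bessel_J :: "real \<Rightarrow> real \<Rightarrow> real" where
  "bessel_J nu x = (\<Sum>k. (-1) ^ k / fact k * rGamma (real k + nu + 1) * (x / 2) powr (2 * real k + nu))"

definition bessel_first_zero :: "real \<Rightarrow> real" where
  "bessel_first_zero nu = Inf {x. 0 < x \<and> bessel_J nu x = 0}"

text \<open>lambda_K(m), with K determined by delta = dim_R K in {1,2,4}.\<close>
definition lambdaK :: "nat \<Rightarrow> nat \<Rightarrow> real" where
  "lambdaK \<delta> m =
     (if \<delta> = 1 then 2 ^ (m - 1) * fact (m - 1)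
      else if \<delta> = 2 then 2 ^ (4 * (m - 1)) * (fact (m - 1))\<^sup>2
      else 2 ^ (8 * (m - 1)) * fact (2 * m - 1) * fact (2 * m - 2))"

end

theory Submission
  imports Defs
begin

text \<open>Put n = \<delta>(m - 1), so that \<alpha> + 1 = n/2. For each of the three fields the right-hand side is
  (2^n \<Gamma>(n/2 + 1))^2 (for \<real> this is Legendre's duplication formula). For n = 1 we have
  J_{1/2}(x) = sqrt (2/(\<pi> x)) sin x, so both sides equal \<pi>. For n \<ge> 2 write
  J_{n/2}(x) = (x/2)^{n/2} g(x), where g(x) = G(x^2) for an entire power series G and
  (x^{n+1} g')' = - x^{n+1} g. By Picone's identity with the test function X - x, g cannot stay
  positive on [0, X] once 2X^2 > (n + 3)(n + 4); hence the first zero j of J_{n/2} satisfies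
  j^2 \<le> (n + 3)(n + 4)/2. It remains to show
  ((n + 3)(n + 4)/2)^n < 16^n \<Gamma>(n/2 + 1)^4, which is checked directly for small n and by an
  induction n \<mapsto> n + 2 based on (1 + 1/m)^m \<le> e for the rest.\<close>

definition power_series :: "(nat \<Rightarrow> real) \<Rightarrow> real \<Rightarrow> real" where
  "power_series c y = (\<Sum>n. c n * y ^ n)"

lemma power_series_has_derivative:
  assumes "\<And>y. summable (\<lambda>n. c n * y ^ n)"
  shows "(power_series c has_real_derivative power_series (diffs c) y) (at y)"
  unfolding power_series_def[abs_def] by (rule termdiffs_strong_converges_everywhere[OF assms])

lemma power_series_square_has_derivative:
  assumes "\<And>y. summable (\<lambda>n. c n * y ^ n)"
  shows "((\<lambda>x. power_series c (x\<^sup>2)) has_real_derivative 2 * x * power_series (diffs c) (x\<^sup>2)) (at x)"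
proof -
  have "((\<lambda>x. x\<^sup>2) has_real_derivative 2 * x) (at x)"
    by (auto intro!: derivative_eq_intros)
  from DERIV_chain2[OF power_series_has_derivative[OF assms] this] show ?thesis
    by (simp add: mult_ac)
qed

definition bessel_coeff :: "real \<Rightarrow> nat \<Rightarrow> real" where
  "bessel_coeff \<nu> k = (-1) ^ k / fact k * rGamma (real k + \<nu> + 1) / 4 ^ k"

lemma bessel_coeff_Suc:
  "4 * (real k + 1) * (real k + \<nu> + 1) * bessel_coeff \<nu> (Suc k) = - bessel_coeff \<nu> k"
proof -
  have rGamma_Suc: "(real k + \<nu> + 1) * rGamma (real (Suc k) + \<nu> + 1) = rGamma (real k + \<nu> + 1)"
    using rGamma_plus1[of "real k + \<nu> + 1"] by (simp add: add_ac)
  have c_Suc: "(real k + 1) * bessel_coeff \<nu> (Suc k)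
      = - ((-1) ^ k / fact k * rGamma (real (Suc k) + \<nu> + 1) / 4 ^ Suc k)"
    unfolding bessel_coeff_def by (simp add: divide_simps del: of_nat_Suc)
  have "4 * (real k + 1) * (real k + \<nu> + 1) * bessel_coeff \<nu> (Suc k)
      = 4 * (real k + \<nu> + 1) * ((real k + 1) * bessel_coeff \<nu> (Suc k))"
    by (simp only: mult_ac)
  also have "\<dots> = 4 * (real k + \<nu> + 1) * - ((-1) ^ k / fact k * rGamma (real (Suc k) + \<nu> + 1) / 4 ^ Suc k)"
    unfolding c_Suc ..
  also have "\<dots> = - ((-1) ^ k / fact k * ((real k + \<nu> + 1) * rGamma (real (Suc k) + \<nu> + 1)) / 4 ^ k)"
    by (simp add: field_simps)
  finally show ?thesis
    unfolding rGamma_Suc bessel_coeff_def .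
qed

lemma summable_bessel_coeff: "summable (\<lambda>k. bessel_coeff \<nu> k * y ^ k)"
proof (rule summable_ratio_test[of "1/2" "nat \<lceil>\<bar>y\<bar> + \<bar>\<nu>\<bar>\<rceil>"])
  fix k assume "nat \<lceil>\<bar>y\<bar> + \<bar>\<nu>\<bar>\<rceil> \<le> k"
  then have k: "\<bar>y\<bar> \<le> real k" "0 \<le> real k + \<nu>" by linarith+
  define p where "p = (real k + 1) * (real k + \<nu> + 1)"
  have "(real k + 1) * 1 \<le> p"
    unfolding p_def using k by (intro mult_left_mono) auto
  then have p: "0 < p" "\<bar>y\<bar> \<le> 2 * p"
    using k by simp_all
  have "4 * p * bessel_coeff \<nu> (Suc k) = - bessel_coeff \<nu> k"
    using bessel_coeff_Suc[of k \<nu>] unfolding p_def by (simp only: mult.assoc)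
  then have c_k: "\<bar>bessel_coeff \<nu> k\<bar> = 4 * p * \<bar>bessel_coeff \<nu> (Suc k)\<bar>"
    using p by (metis abs_minus_cancel abs_mult abs_of_pos zero_less_mult_iff zero_less_numeral)
  have "\<bar>bessel_coeff \<nu> (Suc k)\<bar> * \<bar>y\<bar> \<le> \<bar>bessel_coeff \<nu> (Suc k)\<bar> * (2 * p)"
    using p by (intro mult_left_mono) auto
  also have "\<dots> = \<bar>bessel_coeff \<nu> k\<bar> / 2"
    unfolding c_k by simp
  finally have "\<bar>bessel_coeff \<nu> (Suc k)\<bar> * \<bar>y\<bar> * \<bar>y\<bar> ^ k
      \<le> \<bar>bessel_coeff \<nu> k\<bar> / 2 * \<bar>y\<bar> ^ k"
    by (rule mult_right_mono) simp
  then show "norm (bessel_coeff \<nu> (Suc k) * y ^ Suc k) \<le> 1/2 * norm (bessel_coeff \<nu> k * y ^ k)"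
    by (simp add: abs_mult power_abs mult_ac)
qed simp

lemma summable_bessel_coeff_diffs:
  "summable (\<lambda>k. diffs (bessel_coeff \<nu>) k * y ^ k)"
  "summable (\<lambda>k. diffs (diffs (bessel_coeff \<nu>)) k * y ^ k)"
  by (intro termdiff_converges_all summable_bessel_coeff)+

lemma bessel_J_eq_power_series:
  assumes "0 < x"
  shows "bessel_J \<nu> x = (x / 2) powr \<nu> * power_series (bessel_coeff \<nu>) (x\<^sup>2)"
proof -
  have "(-1) ^ k / fact k * rGamma (real k + \<nu> + 1) * (x / 2) powr (2 * real k + \<nu>)
        = (x / 2) powr \<nu> * (bessel_coeff \<nu> k * (x\<^sup>2) ^ k)" for k
  proof -
    have "(x / 2) powr (2 * real k + \<nu>) = (x / 2) ^ (2 * k) * (x / 2) powr \<nu>"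
      using assms by (simp add: powr_add flip: powr_realpow)
    then show ?thesis
      by (simp add: bessel_coeff_def power_mult power_divide)
  qed
  then have "bessel_J \<nu> x = (\<Sum>k. (x / 2) powr \<nu> * (bessel_coeff \<nu> k * (x\<^sup>2) ^ k))"
    unfolding bessel_J_def by presburger
  also have "\<dots> = (x / 2) powr \<nu> * power_series (bessel_coeff \<nu>) (x\<^sup>2)"
    unfolding power_series_def by (rule suminf_mult[OF summable_bessel_coeff])
  finally show ?thesis .
qed

lemma power_series_bessel_coeff_0: "power_series (bessel_coeff \<nu>) 0 = rGamma (\<nu> + 1)"
  unfolding power_series_def powser_zero by (simp add: bessel_coeff_def)

lemma bessel_power_series_ode:
  fixes \<nu> y :: real
  defines "c \<equiv> bessel_coeff \<nu>"
  shows "4 * y * power_series (diffs (diffs c)) y + 4 * (\<nu> + 1) * power_series (diffs c) y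
           + power_series c y = 0"
proof -
  have "(\<lambda>k. 4 * y * (diffs (diffs c) k * y ^ k)) sums (4 * y * power_series (diffs (diffs c)) y)"
    unfolding power_series_def c_def by (intro sums_mult summable_sums summable_bessel_coeff_diffs)
  moreover have "(\<lambda>k. 4 * (\<nu> + 1) * (diffs c (Suc k) * y ^ Suc k))
                   sums (4 * (\<nu> + 1) * (power_series (diffs c) y - diffs c 0))"
    unfolding power_series_def c_def
    by (intro sums_mult, subst sums_Suc_iff) (simp add: summable_sums summable_bessel_coeff_diffs)
  moreover have "(\<lambda>k. c (Suc k) * y ^ Suc k) sums (power_series c y - c 0)"
    unfolding power_series_def c_def
    by (subst sums_Suc_iff) (simp add: summable_sums summable_bessel_coeff)
  ultimately have "(\<lambda>k. 4 * y * (diffs (diffs c) k * y ^ k) + 4 * (\<nu> + 1) * (diffs c (Suc k) * y ^ Suc k)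
      + c (Suc k) * y ^ Suc k) sums (4 * y * power_series (diffs (diffs c)) y
        + 4 * (\<nu> + 1) * (power_series (diffs c) y - diffs c 0) + (power_series c y - c 0))"
    by (intro sums_add)
  moreover have "4 * y * (diffs (diffs c) k * y ^ k) + 4 * (\<nu> + 1) * (diffs c (Suc k) * y ^ Suc k)
      + c (Suc k) * y ^ Suc k = 0" for k
  proof -
    have "4 * y * (diffs (diffs c) k * y ^ k) + 4 * (\<nu> + 1) * (diffs c (Suc k) * y ^ Suc k)
        + c (Suc k) * y ^ Suc k
        = y ^ Suc k * (4 * (real (Suc k) + 1) * (real (Suc k) + \<nu> + 1) * c (Suc (Suc k)) + c (Suc k))"
      by (simp add: diffs_def algebra_simps)
    then show ?thesis
      unfolding c_def bessel_coeff_Suc by simp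
  qed
  moreover have "4 * (\<nu> + 1) * diffs c 0 + c 0 = 0"
    using bessel_coeff_Suc[of 0 \<nu>] by (simp add: c_def diffs_def)
  ultimately have "(\<lambda>k. 0) sums (4 * y * power_series (diffs (diffs c)) y
        + 4 * (\<nu> + 1) * (power_series (diffs c) y - diffs c 0) + (power_series c y - c 0))"
    by simp
  then have "4 * y * power_series (diffs (diffs c)) y
        + 4 * (\<nu> + 1) * (power_series (diffs c) y - diffs c 0) + (power_series c y - c 0) = 0"
    using sums_unique2 sums_zero by blast
  then show ?thesis
    using \<open>4 * (\<nu> + 1) * diffs c 0 + c 0 = 0\<close> by (simp add: algebra_simps)
qed

lemma bessel_radial_ode_has_derivative:
  fixes n :: nat and x :: real
  defines "c \<equiv> bessel_coeff (real n / 2)"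
  shows "((\<lambda>x. x ^ (n + 1) * (2 * x * power_series (diffs c) (x\<^sup>2))) has_real_derivative
           - (x ^ (n + 1) * power_series c (x\<^sup>2))) (at x)"
proof -
  have "((\<lambda>x. power_series (diffs c) (x\<^sup>2)) has_real_derivative
          2 * x * power_series (diffs (diffs c)) (x\<^sup>2)) (at x)"
    unfolding c_def by (intro power_series_square_has_derivative summable_bessel_coeff_diffs)
  then have "((\<lambda>x. 2 * x * power_series (diffs c) (x\<^sup>2)) has_real_derivative
      2 * power_series (diffs c) (x\<^sup>2) + 4 * x\<^sup>2 * power_series (diffs (diffs c)) (x\<^sup>2)) (at x)"
    by (auto intro!: derivative_eq_intros simp: algebra_simps power2_eq_square)
  from DERIV_mult[OF DERIV_pow[of "n + 1" x] this]
  have "((\<lambda>x. x ^ (n + 1) * (2 * x * power_series (diffs c) (x\<^sup>2))) has_real_derivative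
      x ^ (n + 1) * (2 * (real n + 2) * power_series (diffs c) (x\<^sup>2)
        + 4 * x\<^sup>2 * power_series (diffs (diffs c)) (x\<^sup>2))) (at x)"
    by (simp add: algebra_simps)
  moreover have "4 * x\<^sup>2 * power_series (diffs (diffs c)) (x\<^sup>2)
      + 4 * (real n / 2 + 1) * power_series (diffs c) (x\<^sup>2) + power_series c (x\<^sup>2) = 0"
    unfolding c_def by (rule bessel_power_series_ode)
  then have "2 * (real n + 2) * power_series (diffs c) (x\<^sup>2)
      + 4 * x\<^sup>2 * power_series (diffs (diffs c)) (x\<^sup>2) = - power_series c (x\<^sup>2)"
    by (simp add: algebra_simps)
  ultimately show ?thesis
    by simp
qed

text \<open>The left-hand side is the derivative of H - \<phi>^2 (w g') / g in the shape produced by the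
  product and quotient rules, with w = w x, f = \<phi> x, u = g x and u' = g' x.\<close>

lemma picone_identity:
  fixes w f f' u u' :: real
  assumes "u \<noteq> 0"
  shows "w * (f'\<^sup>2 - f\<^sup>2)
           - (((f' * f + f' * f) * (w * u') + - (w * u) * (f * f)) * u - f * f * (w * u') * u') / (u * u)
         = w * (f' - f * u' / u)\<^sup>2"
  using assms by (simp add: field_simps power2_eq_square)

lemma picone_mono:
  fixes a b :: real and g g' w \<phi> \<phi>' H :: "real \<Rightarrow> real"
  assumes "a \<le> b"
    and g: "\<And>x. x \<in> {a..b} \<Longrightarrow> (g has_real_derivative g' x) (at x)"
    and g_nonzero: "\<And>x. x \<in> {a..b} \<Longrightarrow> g x \<noteq> 0"
    and wg': "\<And>x. x \<in> {a..b} \<Longrightarrow> ((\<lambda>x. w x * g' x) has_real_derivative - (w x * g x)) (at x)"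
    and w: "\<And>x. x \<in> {a..b} \<Longrightarrow> 0 \<le> w x"
    and \<phi>: "\<And>x. x \<in> {a..b} \<Longrightarrow> (\<phi> has_real_derivative \<phi>' x) (at x)"
    and H: "\<And>x. x \<in> {a..b} \<Longrightarrow> (H has_real_derivative w x * ((\<phi>' x)\<^sup>2 - (\<phi> x)\<^sup>2)) (at x)"
  shows "H a - (\<phi> a)\<^sup>2 * (w a * g' a) / g a \<le> H b - (\<phi> b)\<^sup>2 * (w b * g' b) / g b"
proof -
  define \<Psi> where "\<Psi> x = H x - \<phi> x * \<phi> x * (w x * g' x) / g x" for x
  have \<Psi>: "(\<Psi> has_real_derivative w x * (\<phi>' x - \<phi> x * g' x / g x)\<^sup>2) (at x)"
    if x: "x \<in> {a..b}" for x
    unfolding \<Psi>_def[abs_def]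
    using DERIV_diff[OF H[OF x] DERIV_divide[OF DERIV_mult[OF DERIV_mult[OF \<phi>[OF x] \<phi>[OF x]] wg'[OF x]]
          g[OF x] g_nonzero[OF x]]]
    unfolding picone_identity[OF g_nonzero[OF x]] .
  have "\<Psi> a \<le> \<Psi> b"
  proof (rule DERIV_nonneg_imp_nondecreasing[OF \<open>a \<le> b\<close>])
    fix x assume "a \<le> x" "x \<le> b"
    then have x: "x \<in> {a..b}"
      by simp
    show "\<exists>y. (\<Psi> has_real_derivative y) (at x) \<and> 0 \<le> y"
      using \<Psi>[OF x] w[OF x] by (blast intro: mult_nonneg_nonneg zero_le_power2)
  qed
  then show ?thesis
    by (simp add: \<Psi>_def power2_eq_square)
qed

lemma has_real_derivative_power_Suc_div:
  "((\<lambda>x. x ^ Suc k / real (Suc k)) has_real_derivative x ^ k) (at x)"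
  using DERIV_cdivide[OF DERIV_pow[of "Suc k" x], of "real (Suc k)"] by simp

lemma bessel_power_series_pos_imp_le:
  fixes n :: nat and X :: real
  assumes "0 < X"
    and pos: "\<And>x. x \<in> {0..X} \<Longrightarrow> 0 < power_series (bessel_coeff (real n / 2)) (x\<^sup>2)"
  shows "2 * X\<^sup>2 \<le> (real n + 3) * (real n + 4)"
proof -
  define c where "c = bessel_coeff (real n / 2)"
  \<comment> \<open>H is the primitive of x^{n+1}(\<phi>'^2 - \<phi>^2) for the test function \<phi> x = X - x; Picone's
    identity gives H X \<ge> 0, whereas H X < 0 as soon as 2X^2 > (n + 3)(n + 4).\<close>
  define P where "P k x = x ^ Suc k / real (Suc k)" for k and x :: real
  define H where "H x = (1 - X\<^sup>2) * P (n + 1) x + 2 * X * P (n + 2) x - P (n + 3) x" for x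
  have "(H has_real_derivative (1 - X\<^sup>2) * x ^ (n + 1) + 2 * X * x ^ (n + 2) - x ^ (n + 3)) (at x)" for x
    unfolding H_def[abs_def] P_def
    by (intro DERIV_diff DERIV_add DERIV_cmult has_real_derivative_power_Suc_div)
  moreover have "(1 - X\<^sup>2) * x ^ (n + 1) + 2 * X * x ^ (n + 2) - x ^ (n + 3)
      = x ^ (n + 1) * ((-1)\<^sup>2 - (X - x)\<^sup>2)" for x
    by (simp add: power_add power2_eq_square power3_eq_cube algebra_simps)
  ultimately have H: "(H has_real_derivative x ^ (n + 1) * ((-1)\<^sup>2 - (X - x)\<^sup>2)) (at x)" for x
    by simp
  have "H 0 - (X - 0)\<^sup>2 * (0 ^ (n + 1) * (2 * 0 * power_series (diffs c) (0\<^sup>2))) / power_series c (0\<^sup>2)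
      \<le> H X - (X - X)\<^sup>2 * (X ^ (n + 1) * (2 * X * power_series (diffs c) (X\<^sup>2))) / power_series c (X\<^sup>2)"
  proof (rule picone_mono)
    show "((\<lambda>x. power_series c (x\<^sup>2)) has_real_derivative
        2 * x * power_series (diffs c) (x\<^sup>2)) (at x)" for x
      unfolding c_def by (intro power_series_square_has_derivative summable_bessel_coeff)
    show "((\<lambda>x. x ^ (n + 1) * (2 * x * power_series (diffs c) (x\<^sup>2))) has_real_derivative
        - (x ^ (n + 1) * power_series c (x\<^sup>2))) (at x)" for x
      unfolding c_def by (rule bessel_radial_ode_has_derivative)
    show "((\<lambda>x. X - x) has_real_derivative -1) (at x)" for x
      by (auto intro!: derivative_eq_intros)
    show "power_series c (x\<^sup>2) \<noteq> 0" if "x \<in> {0..X}" for x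
      using pos[OF that] by (simp add: c_def)
    show "0 \<le> x ^ (n + 1)" if "x \<in> {0..X}" for x
      using that by simp
  qed (use \<open>0 < X\<close> H in auto)
  moreover have "H 0 = 0"
    by (simp add: H_def P_def)
  ultimately have "0 \<le> H X"
    by simp
  also have "H X = X ^ (n + 2) / ((real n + 2) * (real n + 3) * (real n + 4))
      * ((real n + 3) * (real n + 4) - 2 * X\<^sup>2)"
  proof -
    define p q r where "p = real n + 2" and "q = real n + 3" and "r = real n + 4"
    define Y where "Y = X ^ (n + 2)"
    have pqr: "p \<noteq> 0" "q \<noteq> 0" "r \<noteq> 0"
      by (simp_all add: p_def q_def r_def)
    have "H X = (1 - X\<^sup>2) * (Y / p) + 2 * X * (X * Y / q) - X\<^sup>2 * Y / r"
      unfolding H_def P_def p_def q_def r_def Y_def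
      by (simp add: power2_eq_square eval_nat_numeral algebra_simps)
    also have "\<dots> = Y * (q * r - X\<^sup>2 * (q * r - 2 * p * r + p * q)) / (p * q * r)"
      using pqr by (simp add: field_simps power2_eq_square)
    also have "q * r - 2 * p * r + p * q = 2"
      by (simp add: p_def q_def r_def algebra_simps)
    finally show ?thesis
      by (simp add: p_def q_def r_def Y_def)
  qed
  finally have "0 \<le> X ^ (n + 2) / ((real n + 2) * (real n + 3) * (real n + 4))
      * ((real n + 3) * (real n + 4) - 2 * X\<^sup>2)" .
  moreover have "0 < X ^ (n + 2) / ((real n + 2) * (real n + 3) * (real n + 4))"
    using \<open>0 < X\<close> by simp
  ultimately have "0 \<le> (real n + 3) * (real n + 4) - 2 * X\<^sup>2"
    by (meson mult_pos_neg not_le)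
  then show ?thesis
    by simp
qed

lemma bessel_J_has_zero:
  fixes n :: nat and X :: real
  assumes "0 < X" and "(real n + 3) * (real n + 4) < 2 * X\<^sup>2"
  shows "\<exists>z. 0 < z \<and> z \<le> X \<and> bessel_J (real n / 2) z = 0"
proof -
  define g where "g x = power_series (bessel_coeff (real n / 2)) (x\<^sup>2)" for x
  have "isCont g x" for x
    unfolding g_def by (rule DERIV_isCont[OF power_series_square_has_derivative[OF summable_bessel_coeff]])
  then have g_cont: "continuous_on A g" for A
    by (simp add: continuous_at_imp_continuous_on)
  have "0 < g 0"
    by (simp add: g_def power_series_bessel_coeff_0 rGamma_inverse_Gamma)
  have "\<not> (\<forall>x\<in>{0..X}. 0 < g x)"
  proof
    assume "\<forall>x\<in>{0..X}. 0 < g x"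
    then have "2 * X\<^sup>2 \<le> (real n + 3) * (real n + 4)"
      using bessel_power_series_pos_imp_le[OF \<open>0 < X\<close>] by (simp add: g_def)
    with assms(2) show False
      by simp
  qed
  then obtain x where x: "0 \<le> x" "x \<le> X" "g x \<le> 0"
    by (auto simp: not_less)
  obtain z where z: "0 \<le> z" "z \<le> x" "g z = 0"
    using IVT2'[of g x 0 0] x \<open>0 < g 0\<close> g_cont by auto
  with \<open>0 < g 0\<close> have "0 < z"
    by (cases "z = 0") auto
  then have "bessel_J (real n / 2) z = 0"
    using z by (simp add: bessel_J_eq_power_series g_def)
  then show ?thesis
    using \<open>0 < z\<close> z x by auto
qed

lemma bessel_first_zero_bound:
  fixes n :: nat
  shows "0 \<le> bessel_first_zero (real n / 2)"
    and "2 * (bessel_first_zero (real n / 2))\<^sup>2 \<le> (real n + 3) * (real n + 4)"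
proof -
  define Z where "Z = {x. 0 < x \<and> bessel_J (real n / 2) x = 0}"
  define r where "r = sqrt ((real n + 3) * (real n + 4) / 2)"
  have r: "0 < r" "r\<^sup>2 = (real n + 3) * (real n + 4) / 2"
    by (simp_all add: r_def)
  have zero_below: "\<exists>z\<in>Z. z \<le> X" if "r < X" for X
  proof -
    have "r\<^sup>2 < X\<^sup>2"
      using r that by (intro power_strict_mono) auto
    then show ?thesis
      using bessel_J_has_zero[of X n] r that by (auto simp: Z_def)
  qed
  have bdd: "bdd_below Z"
    by (rule bdd_belowI[of _ 0]) (simp add: Z_def)
  have "Z \<noteq> {}"
    using zero_below[of "r + 1"] by auto
  then show nonneg: "0 \<le> bessel_first_zero (real n / 2)"
    unfolding bessel_first_zero_def Z_def[symmetric] by (rule cInf_greatest) (simp add: Z_def)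
  have "bessel_first_zero (real n / 2) \<le> r"
  proof (rule dense_ge)
    fix X assume "r < X"
    then obtain z where "z \<in> Z" "z \<le> X"
      using zero_below by blast
    then show "bessel_first_zero (real n / 2) \<le> X"
      unfolding bessel_first_zero_def Z_def[symmetric] using cInf_lower[OF _ bdd] by fastforce
  qed
  then have "(bessel_first_zero (real n / 2))\<^sup>2 \<le> r\<^sup>2"
    using nonneg by (rule power_mono)
  then show "2 * (bessel_first_zero (real n / 2))\<^sup>2 \<le> (real n + 3) * (real n + 4)"
    using r by simp
qed

lemma Gamma_plus1_pos: "0 < x \<Longrightarrow> Gamma (x + 1) = x * Gamma (x :: real)"
  by (rule Gamma_plus1) (auto dest: nonpos_Ints_nonpos)

lemma Gamma_half_nat_Suc_Suc:
  "Gamma (real (Suc (Suc n)) / 2 + 1) = (real n / 2 + 1) * Gamma (real n / 2 + 1)"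
  using Gamma_plus1_pos[of "real n / 2 + 1"] by (simp add: add_ac add_divide_distrib)

lemma Gamma_half_nat_duplication:
  "2 ^ n * Gamma (real n / 2 + 1 / 2) * Gamma (real n / 2 + 1) = sqrt pi * fact n"
proof (induction n)
  case 0
  then show ?case
    by (simp add: Gamma_one_half_real)
next
  case (Suc n)
  have "Gamma (real (Suc n) / 2 + 1 / 2) = Gamma (real n / 2 + 1)"
    by (simp add: add_divide_distrib add_ac)
  moreover have "Gamma (real (Suc n) / 2 + 1) = (real (Suc n) / 2) * Gamma (real n / 2 + 1 / 2)"
    using Gamma_plus1_pos[of "real n / 2 + 1 / 2"] by (simp add: add_divide_distrib add_ac)
  ultimately have "2 ^ Suc n * Gamma (real (Suc n) / 2 + 1 / 2) * Gamma (real (Suc n) / 2 + 1)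
      = real (Suc n) * (2 ^ n * Gamma (real n / 2 + 1 / 2) * Gamma (real n / 2 + 1))"
    by (simp only: power_Suc mult_ac) simp
  then show ?case
    by (simp add: Suc.IH)
qed

lemma add_one_power_le_exp:
  fixes m :: real
  assumes "0 < m"
  shows "(m + 1) ^ N \<le> exp (real N / m) * m ^ N"
proof -
  have "((m + 1) / m) ^ N \<le> exp (1 / m) ^ N"
    using assms exp_ge_add_one_self[of "1 / m"] by (intro power_mono) (simp_all add: field_simps)
  also have "exp (1 / m) ^ N = exp (real N / m)"
    by (simp flip: exp_of_nat_mult)
  finally show ?thesis
    using assms by (simp add: power_divide divide_le_eq)
qed

lemma exp_4_mult_power_le:
  fixes m :: real
  assumes "11 / 2 \<le> m"
  shows "exp 4 * m ^ 8 \<le> 64 * (m\<^sup>2 - 1) ^ 4"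
proof -
  define s where "s = m\<^sup>2"
  have s: "121 / 4 \<le> s"
    using power_mono[OF assms, of 2] by (simp add: s_def power_divide)
  have "exp 2 = exp (1 :: real) ^ 2"
    by (simp flip: exp_of_nat_mult)
  also have "\<dots> < (272 / 100) ^ 2"
    using e_less_272 by (intro power_strict_mono) auto
  finally have "exp 2 * s\<^sup>2 \<le> 7.3984 * s\<^sup>2"
    by (intro mult_right_mono) (simp_all add: power_divide)
  also have "\<dots> \<le> 8 * (s - 1)\<^sup>2"
  proof -
    have "0 \<le> s * (0.6016 * s - 16)"
      using s by (intro mult_nonneg_nonneg) auto
    then show ?thesis
      by (simp add: power2_eq_square algebra_simps)
  qed
  finally have "(exp 2 * s\<^sup>2)\<^sup>2 \<le> (8 * (s - 1)\<^sup>2)\<^sup>2"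
    by (intro power_mono) simp_all
  then show ?thesis
    by (simp add: s_def power_mult_distrib flip: power_mult exp_of_nat_mult)
qed

lemma Gamma_half_nat_even: "Gamma (real (2 * k) / 2 + 1) = fact k"
proof -
  have "real (2 * k) / 2 + 1 = 1 + real k"
    by simp
  then show ?thesis
    by (simp only: Gamma_fact)
qed

lemma Gamma_half_nat_odd:
  "Gamma (real (2 * k + 1) / 2 + 1) = sqrt pi * fact (2 * k + 1) / (2 ^ (2 * k + 1) * fact k)"
proof -
  have "real (2 * k + 1) / 2 + 1 / 2 = 1 + real k"
    by (simp add: add_divide_distrib)
  then have "Gamma (real (2 * k + 1) / 2 + 1 / 2) = fact k"
    by (simp only: Gamma_fact)
  then show ?thesis
    using Gamma_half_nat_duplication[of "2 * k + 1"] by (simp add: field_simps)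
qed

lemma Gamma_half_nat_odd_pow4:
  "Gamma (real (2 * k + 1) / 2 + 1) ^ 4 = pi\<^sup>2 * (fact (2 * k + 1) / (2 ^ (2 * k + 1) * fact k)) ^ 4"
proof -
  have "sqrt pi ^ 4 = pi\<^sup>2"
    using power_mult[of "sqrt pi" 2 2] by simp
  then show ?thesis
    unfolding Gamma_half_nat_odd by (simp add: power_mult_distrib power_divide)
qed

lemma pi_squared_gt_9: "9 < pi\<^sup>2"
  using pi_gt3 power_strict_mono[of 3 pi 2] by simp

lemma Gamma_half_nat_pow4_gt_large:
  fixes n :: nat
  assumes "7 \<le> n"
  shows "(real n / 2 + 2) ^ (2 * n) < 8 ^ n * Gamma (real n / 2 + 1) ^ 4"
  using assms
proof (induction n rule: less_induct)
  case (less n)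
  consider "n = 7" | "n = 8" | "9 \<le> n"
    using less.prems by linarith
  then show ?case
  proof cases
    case 1
    show ?thesis
      using 1 pi_squared_gt_9 Gamma_half_nat_odd_pow4[of 3] by (simp add: fact_numeral power_divide)
  next
    case 2
    show ?thesis
      using 2 Gamma_half_nat_even[of 4] by (simp add: fact_numeral)
  next
    case 3
    define k where "k = n - 2"
    define m where "m = real k / 2 + 2"
    have n: "n = Suc (Suc k)" and k: "7 \<le> k"
      using 3 by (simp_all add: k_def)
    have m: "11 / 2 \<le> m" "real n / 2 + 2 = m + 1" "real k / 2 + 1 = m - 1"
      using k by (simp_all add: m_def n)
    have "k < n"
      by (simp add: n)
    have IH: "m ^ (2 * k) < 8 ^ k * Gamma (real k / 2 + 1) ^ 4"
      unfolding m_def by (rule less.IH[OF \<open>k < n\<close> k])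
    \<comment> \<open>Multiplying by (m + 1)^4 makes the exponent 4m, so that (1 + 1/m)^{4m} \<le> e^4 applies.\<close>
    have "2 * n + 4 = 2 * k + 8"
      by (simp add: n)
    then have "(m + 1) ^ (2 * n) * (m + 1) ^ 4 = (m + 1) ^ (2 * k + 8)"
      by (simp only: flip: power_add)
    also have "\<dots> \<le> exp 4 * m ^ (2 * k + 8)"
    proof -
      have "real (2 * k + 8) / m = 4"
        using m by (simp add: m_def field_simps)
      then show ?thesis
        using add_one_power_le_exp[of m "2 * k + 8"] m by simp
    qed
    also have "\<dots> = exp 4 * m ^ 8 * m ^ (2 * k)"
      by (simp add: power_add)
    also have "\<dots> < exp 4 * m ^ 8 * (8 ^ k * Gamma (real k / 2 + 1) ^ 4)"
      using IH m(1) by (intro mult_strict_left_mono) auto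
    also have "\<dots> \<le> 64 * (m\<^sup>2 - 1) ^ 4 * (8 ^ k * Gamma (real k / 2 + 1) ^ 4)"
      using exp_4_mult_power_le[OF m(1)] by (intro mult_right_mono) auto
    also have "\<dots> = 8 ^ n * ((m - 1) * Gamma (real k / 2 + 1)) ^ 4 * (m + 1) ^ 4"
    proof -
      have "m\<^sup>2 - 1 = (m - 1) * (m + 1)"
        by (simp add: power2_eq_square algebra_simps)
      then show ?thesis
        by (simp add: n power_mult_distrib)
    qed
    also have "\<dots> = 8 ^ n * Gamma (real n / 2 + 1) ^ 4 * (m + 1) ^ 4"
      unfolding n Gamma_half_nat_Suc_Suc m(3) ..
    finally have "(m + 1) ^ (2 * n) * (m + 1) ^ 4 < 8 ^ n * Gamma (real n / 2 + 1) ^ 4 * (m + 1) ^ 4" .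
    then show ?thesis
      unfolding m(2) by (rule mult_right_less_imp_less) (use m(1) in simp)
  qed
qed

lemma Gamma_half_nat_pow4_gt:
  fixes n :: nat
  assumes "2 \<le> n"
  shows "((real n + 3) * (real n + 4) / 2) ^ n < 16 ^ n * Gamma (real n / 2 + 1) ^ 4"
proof (cases "n \<le> 6")
  case True
  from True assms consider "n = 2" | "n = 3" | "n = 4" | "n = 5" | "n = 6"
    by linarith
  then show ?thesis
  proof cases
    case 1
    then show ?thesis
      using Gamma_half_nat_even[of 1] by simp
  next
    case 2
    then show ?thesis
      using Gamma_half_nat_odd_pow4[of 1] pi_squared_gt_9 by (simp add: fact_numeral power_divide)
  next
    case 3
    then show ?thesis
      using Gamma_half_nat_even[of 2] by simp
  next
    case 4
    then show ?thesis
      using Gamma_half_nat_odd_pow4[of 2] pi_squared_gt_9 by (simp add: fact_numeral power_divide)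
  next
    case 5
    then show ?thesis
      using Gamma_half_nat_even[of 3] by (simp add: fact_numeral)
  qed
next
  case False
  have "(real n + 3) * (real n + 4) / 2 \<le> 2 * (real n / 2 + 2)\<^sup>2"
    by (simp add: power2_eq_square field_simps)
  then have "((real n + 3) * (real n + 4) / 2) ^ n \<le> (2 * (real n / 2 + 2)\<^sup>2) ^ n"
    by (intro power_mono) auto
  also have "\<dots> = 2 ^ n * (real n / 2 + 2) ^ (2 * n)"
    by (simp add: power_mult_distrib power_mult)
  also have "\<dots> < 2 ^ n * (8 ^ n * Gamma (real n / 2 + 1) ^ 4)"
    using False Gamma_half_nat_pow4_gt_large[of n] by simp
  also have "\<dots> = 16 ^ n * Gamma (real n / 2 + 1) ^ 4"
    by (simp add: mult.assoc flip: power_mult_distrib)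
  finally show ?thesis .
qed

lemma bessel_coeff_one_half: "bessel_coeff (1 / 2) k = (-1) ^ k * (2 / sqrt pi) / fact (2 * k + 1)"
proof -
  define F K where "F = (fact (2 * k + 1) :: real)" and "K = (fact k :: real)"
  have "F > 0" "K > 0"
    by (simp_all add: F_def K_def)
  have "Gamma (real k + 1 / 2 + 1) = sqrt pi * F / (2 * 4 ^ k * K)"
    using Gamma_half_nat_odd[of k] by (simp add: F_def K_def add_divide_distrib power_mult)
  then have "rGamma (real k + 1 / 2 + 1) = 2 * 4 ^ k * K / (sqrt pi * F)"
    by (simp add: rGamma_inverse_Gamma)
  then show ?thesis
    using \<open>F > 0\<close> \<open>K > 0\<close>
    unfolding bessel_coeff_def F_def[symmetric] K_def[symmetric] by (simp add: field_simps)
qed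

lemma bessel_J_one_half:
  assumes "0 < x"
  shows "bessel_J (1 / 2) x = sqrt (2 / (pi * x)) * sin x"
proof -
  have "(\<lambda>k. x * (bessel_coeff (1 / 2) k * (x\<^sup>2) ^ k))
      sums (x * power_series (bessel_coeff (1 / 2)) (x\<^sup>2))"
    unfolding power_series_def by (intro sums_mult summable_sums summable_bessel_coeff)
  moreover have "(\<lambda>k. x * (bessel_coeff (1 / 2) k * (x\<^sup>2) ^ k))
      = (\<lambda>k. 2 / sqrt pi * ((-1) ^ k / fact (2 * k + 1) * x ^ (2 * k + 1)))"
    by (simp add: fun_eq_iff bessel_coeff_one_half power_mult)
  ultimately have "x * power_series (bessel_coeff (1 / 2)) (x\<^sup>2) = 2 / sqrt pi * sin x"
    using sums_mult[OF sin_paired, of "2 / sqrt pi" x] sums_unique2 by force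
  then have "bessel_J (1 / 2) x = sqrt (x / 2) * 2 / (sqrt pi * x) * sin x"
    using assms by (simp add: bessel_J_eq_power_series powr_half_sqrt field_simps)
  also have "sqrt (x / 2) * 2 / (sqrt pi * x) = sqrt (2 / (pi * x))"
  proof (rule real_sqrt_unique[symmetric])
    show "(sqrt (x / 2) * 2 / (sqrt pi * x))\<^sup>2 = 2 / (pi * x)"
      using assms by (simp add: power_mult_distrib power_divide field_simps power2_eq_square)
  qed (use assms in simp)
  finally show ?thesis .
qed

lemma bessel_first_zero_one_half: "bessel_first_zero (1 / 2) = pi"
  unfolding bessel_first_zero_def
proof (rule cInf_eq_minimum)
  show "pi \<in> {x. 0 < x \<and> bessel_J (1 / 2) x = 0}"
    by (simp add: bessel_J_one_half)
  fix x assume "x \<in> {x. 0 < x \<and> bessel_J (1 / 2) x = 0}"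
  then have "0 < x" "sin x = 0"
    by (auto simp: bessel_J_one_half)
  then show "pi \<le> x"
    using sin_gt_zero[of x] by (cases "x < pi") auto
qed

lemma lambdaK_eq_Gamma:
  assumes "\<delta> \<in> {1, 2, 4}" and "1 \<le> m"
  defines "n \<equiv> \<delta> * (m - 1)"
  shows "Gamma (real n / 2 + 1) * Gamma (real \<delta> / 2) / Gamma (real (\<delta> * m) / 2) * lambdaK \<delta> m
           = (2 ^ n * Gamma (real n / 2 + 1))\<^sup>2"
proof -
  obtain j where m: "m = Suc j"
    using \<open>1 \<le> m\<close> by (cases m) auto
  consider "\<delta> = 1" | "\<delta> = 2" | "\<delta> = 4"
    using assms(1) by auto
  then show ?thesis
  proof cases
    case 1
    define A B where "A = Gamma (real n / 2 + 1 / 2)" and "B = Gamma (real n / 2 + 1)"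
    have "0 < A"
      by (simp add: A_def)
    have duplication: "sqrt pi * fact n = 2 ^ n * A * B"
      using Gamma_half_nat_duplication[of n] by (simp add: A_def B_def)
    have "real (\<delta> * m) / 2 = real n / 2 + 1 / 2"
      by (simp add: 1 n_def m add_divide_distrib)
    then have "Gamma (real (\<delta> * m) / 2) = A"
      by (simp only: A_def)
    moreover have "Gamma (real \<delta> / 2) = sqrt pi"
      by (simp add: 1 Gamma_one_half_real)
    moreover have "lambdaK \<delta> m = 2 ^ n * fact n"
      by (simp add: 1 n_def lambdaK_def)
    ultimately have "Gamma (real n / 2 + 1) * Gamma (real \<delta> / 2) / Gamma (real (\<delta> * m) / 2) * lambdaK \<delta> m
        = B / A * 2 ^ n * (sqrt pi * fact n)"
      unfolding B_def[symmetric] by simp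
    also have "\<dots> = (2 ^ n * B)\<^sup>2"
      unfolding duplication using \<open>0 < A\<close> by (simp add: power2_eq_square)
    finally show ?thesis
      by (simp add: B_def)
  next
    case 2
    have "real n / 2 + 1 = real (2 * j) / 2 + 1" "real (\<delta> * m) / 2 = real (2 * j) / 2 + 1"
      by (simp_all add: 2 n_def m)
    then have "Gamma (real n / 2 + 1) = fact j" "Gamma (real (\<delta> * m) / 2) = fact j"
      by (simp_all only: Gamma_half_nat_even)
    then show ?thesis
      by (simp add: 2 n_def m lambdaK_def power2_eq_square power_mult power_mult_distrib)
        (simp flip: power_mult_distrib)
  next
    case 3
    have "real n / 2 + 1 = real (2 * (2 * j)) / 2 + 1"
        "real (\<delta> * m) / 2 = real (2 * (2 * j + 1)) / 2 + 1"
      by (simp_all add: 3 n_def m)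
    then have "Gamma (real n / 2 + 1) = fact (2 * j)" "Gamma (real (\<delta> * m) / 2) = fact (2 * j + 1)"
      by (simp_all only: Gamma_half_nat_even)
    moreover have "Gamma (real \<delta> / 2) = 1"
      using Gamma_fact[of 1] by (simp add: 3)
    ultimately show ?thesis
      by (simp add: 3 n_def m lambdaK_def power2_eq_square power_mult power_mult_distrib)
        (simp flip: power_mult_distrib)
  qed
qed

lemma Gamma_three_halves: "Gamma (3 / 2) = sqrt pi / 2"
  using Gamma_half_nat_odd[of 0] by simp

lemma bessel_first_zero_pow_lt:
  fixes n :: nat
  assumes "2 \<le> n"
  shows "bessel_first_zero (real n / 2) ^ n < (2 ^ n * Gamma (real n / 2 + 1))\<^sup>2"
proof -
  define j where "j = bessel_first_zero (real n / 2)"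
  have "(j ^ n)\<^sup>2 = (j\<^sup>2) ^ n"
    by (simp flip: power_mult mult.commute)
  also have "\<dots> \<le> ((real n + 3) * (real n + 4) / 2) ^ n"
    using bessel_first_zero_bound[of n] by (intro power_mono) (simp_all add: j_def)
  also have "\<dots> < 16 ^ n * Gamma (real n / 2 + 1) ^ 4"
    using Gamma_half_nat_pow4_gt[OF assms] .
  also have "\<dots> = ((2 ^ n * Gamma (real n / 2 + 1))\<^sup>2)\<^sup>2"
    by (simp add: power_mult_distrib flip: power_mult) (simp add: power_mult)
  finally show ?thesis
    unfolding j_def[symmetric] by (rule power_less_imp_less_base) simp
qed

theorem proposition5p1:
  fixes \<delta> m :: nat
  assumes "\<delta> \<in> {1, 2, 4}" and "m \<ge> 2"
  defines "\<alpha> \<equiv> (real \<delta> * (real m - 1) - 2) / 2"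
      and "\<beta> \<equiv> (real \<delta> - 2) / 2"
  shows "(m = 2 \<and> \<delta> = 1 \<longrightarrow>
            bessel_first_zero (\<alpha> + 1) ^ (\<delta> * (m - 1))
              = Gamma (\<alpha> + 2) * Gamma (\<beta> + 1) / Gamma (\<alpha> + \<beta> + 2) * lambdaK \<delta> m)
       \<and> (\<not> (m = 2 \<and> \<delta> = 1) \<longrightarrow>
            bessel_first_zero (\<alpha> + 1) ^ (\<delta> * (m - 1))
              < Gamma (\<alpha> + 2) * Gamma (\<beta> + 1) / Gamma (\<alpha> + \<beta> + 2) * lambdaK \<delta> m)"
proof -
  define n where "n = \<delta> * (m - 1)"
  have "real n = real \<delta> * (real m - 1)"
    using assms(2) by (simp add: n_def of_nat_diff)
  then have \<alpha>\<beta>: "\<alpha> + 1 = real n / 2" "\<alpha> + 2 = real n / 2 + 1" "\<beta> + 1 = real \<delta> / 2"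
      "\<alpha> + \<beta> + 2 = real (\<delta> * m) / 2"
    by (simp_all add: \<alpha>_def \<beta>_def field_simps)
  have reduced: "bessel_first_zero (\<alpha> + 1) ^ (\<delta> * (m - 1)) = bessel_first_zero (real n / 2) ^ n"
      "Gamma (\<alpha> + 2) * Gamma (\<beta> + 1) / Gamma (\<alpha> + \<beta> + 2) * lambdaK \<delta> m
         = (2 ^ n * Gamma (real n / 2 + 1))\<^sup>2"
    unfolding \<alpha>\<beta> n_def using assms(2) by (simp, intro lambdaK_eq_Gamma[OF assms(1)]) simp
  have "n = 1 \<longleftrightarrow> m = 2 \<and> \<delta> = 1" and "n \<noteq> 1 \<Longrightarrow> 2 \<le> n"
    using assms(1,2) by (auto simp: n_def)
  then show ?thesis
    unfolding reduced
    using bessel_first_zero_pow_lt[of n]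
    by (auto simp: bessel_first_zero_one_half Gamma_three_halves power_divide)
qed

end
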